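(* Let $\{G_i\}$ be a family of connected graphs with common induced subgraph $J$, embedded as $J_i\subseteq G_i$, such that $\{(G_i|J_i)\}$ is isometric, and let $H=\amalg\{(G_i|J_i)\}$. Suppose $\dim_l(H)=\sum_i\dim_l(G_i)$. If, for each $k$, $B_k$ is a local metric basis for $G_k$ (viewed as a subset of $V(H)$), then $B_i\cap B_j=\emptyset$ for all $i\neq j$.
   Context: $d_G$ is shortest-path distance in $G$. A vertex $w$ distinguishes an edge $uv$ of $G$ if $d_G(w,u)\neq d_G(w,v)$. A local metric set of $G$ is a set of vertices such that every edge is distinguished by one of them; a local metric basis is one of minimum cardinality, and $\dim_l(G)$ is that cardinality. $J$ is a common induced subgraph of each $G_i$ via injective maps $\iota_i:V(J)\to V(G_i)$ with $\iota_i(x)\iota_i(y)\in E(G_i)$ iff $xy\in E(J)$; $J_i$ is the induced image, $x^i=\iota_i(x)$. $H=\amalg\{(G_i|J_i)\}$ is obtained from the disjoint union of the $G_i$ by identifying, for each $x\in V(J)$, all $x^i$ into one vertex; each $G_i$ is regarded as a subgraph of $H$ (so distinct $G_i$, $G_j$ share exactly the vertices of $J$). The family is isometric if $d_{G_i}(a^i,b^i)=d_{G_j}(a^j,b^j)$ for all $i,j$ and $a,b\in V(J)$. *)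

theory Defs
  imports Main "HOL-Library.Extended_Nat"
begin

definition graph :: "'v set \<Rightarrow> ('v \<Rightarrow> 'v \<Rightarrow> bool) \<Rightarrow> bool" where
  "graph V E \<longleftrightarrow> finite V \<and> (\<forall>u v. E u v \<longrightarrow> u \<in> V \<and> v \<in> V \<and> E v u \<and> u \<noteq> v)"

definition walk_len :: "'v set \<Rightarrow> ('v \<Rightarrow> 'v \<Rightarrow> bool) \<Rightarrow> 'v \<Rightarrow> 'v \<Rightarrow> nat \<Rightarrow> bool" where
  "walk_len V E u v n \<longleftrightarrow> (\<exists>xs. length xs = Suc n \<and> hd xs = u \<and> last xs = v \<and> set xs \<subseteq> V
       \<and> (\<forall>k < n. E (xs ! k) (xs ! Suc k)))"

text \<open>Shortest-path distance (infinite if no walk exists).\<close>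
definition gdist :: "'v set \<Rightarrow> ('v \<Rightarrow> 'v \<Rightarrow> bool) \<Rightarrow> 'v \<Rightarrow> 'v \<Rightarrow> enat" where
  "gdist V E u v = (INF n \<in> {n. walk_len V E u v n}. enat n)"

definition connected_graph :: "'v set \<Rightarrow> ('v \<Rightarrow> 'v \<Rightarrow> bool) \<Rightarrow> bool" where
  "connected_graph V E \<longleftrightarrow> graph V E \<and> (\<forall>u\<in>V. \<forall>v\<in>V. \<exists>n. walk_len V E u v n)"

definition local_metric_set :: "'v set \<Rightarrow> ('v \<Rightarrow> 'v \<Rightarrow> bool) \<Rightarrow> 'v set \<Rightarrow> bool" where
  "local_metric_set V E S \<longleftrightarrow> S \<subseteq> V \<and>
     (\<forall>u v. E u v \<longrightarrow> (\<exists>w\<in>S. gdist V E w u \<noteq> gdist V E w v))"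

definition local_metric_dim :: "'v set \<Rightarrow> ('v \<Rightarrow> 'v \<Rightarrow> bool) \<Rightarrow> nat" where
  "local_metric_dim V E = (LEAST n. \<exists>S. local_metric_set V E S \<and> card S = n)"

definition local_metric_basis :: "'v set \<Rightarrow> ('v \<Rightarrow> 'v \<Rightarrow> bool) \<Rightarrow> 'v set \<Rightarrow> bool" where
  "local_metric_basis V E S \<longleftrightarrow> local_metric_set V E S \<and> card S = local_metric_dim V E"

text \<open>Graphs G_i = (V i, E i) for i in I, common induced subgraph J = (VJ, EJ)
  embedded by \<iota> i. Vertices of H: Inl x for x in VJ (the identified copies x^i), and
  Inr (i,v) for vertices v of G_i outside the image of J.\<close>

definition amal_map :: "'j set \<Rightarrow> ('i \<Rightarrow> 'j \<Rightarrow> 'v) \<Rightarrow> 'i \<Rightarrow> 'v \<Rightarrow> 'j + ('i \<times> 'v)" where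
  "amal_map VJ \<iota> i v = (if v \<in> \<iota> i ` VJ then Inl (the_inv_into VJ (\<iota> i) v) else Inr (i, v))"

definition amal_V :: "'i set \<Rightarrow> ('i \<Rightarrow> 'v set) \<Rightarrow> 'j set \<Rightarrow> ('i \<Rightarrow> 'j \<Rightarrow> 'v) \<Rightarrow> ('j + ('i \<times> 'v)) set" where
  "amal_V I V VJ \<iota> = (\<Union>i\<in>I. amal_map VJ \<iota> i ` V i)"

definition amal_E :: "'i set \<Rightarrow> ('i \<Rightarrow> 'v \<Rightarrow> 'v \<Rightarrow> bool) \<Rightarrow> 'j set \<Rightarrow> ('i \<Rightarrow> 'j \<Rightarrow> 'v)
    \<Rightarrow> ('j + ('i \<times> 'v)) \<Rightarrow> ('j + ('i \<times> 'v)) \<Rightarrow> bool" where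
  "amal_E I E VJ \<iota> a b \<longleftrightarrow> (\<exists>i\<in>I. \<exists>u v. E i u v \<and> a = amal_map VJ \<iota> i u \<and> b = amal_map VJ \<iota> i v)"

definition induced_embedding :: "'j set \<Rightarrow> ('j \<Rightarrow> 'j \<Rightarrow> bool) \<Rightarrow> 'v set \<Rightarrow> ('v \<Rightarrow> 'v \<Rightarrow> bool) \<Rightarrow> ('j \<Rightarrow> 'v) \<Rightarrow> bool" where
  "induced_embedding VJ EJ V E f \<longleftrightarrow> inj_on f VJ \<and> f ` VJ \<subseteq> V \<and>
     (\<forall>x\<in>VJ. \<forall>y\<in>VJ. E (f x) (f y) \<longleftrightarrow> EJ x y)"

definition isometric_family :: "'i set \<Rightarrow> ('i \<Rightarrow> 'v set) \<Rightarrow> ('i \<Rightarrow> 'v \<Rightarrow> 'v \<Rightarrow> bool) \<Rightarrow> 'j set \<Rightarrow> ('i \<Rightarrow> 'j \<Rightarrow> 'v) \<Rightarrow> bool" where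
  "isometric_family I V E VJ \<iota> \<longleftrightarrow> (\<forall>i\<in>I. \<forall>j\<in>I. \<forall>a\<in>VJ. \<forall>b\<in>VJ.
     gdist (V i) (E i) (\<iota> i a) (\<iota> i b) = gdist (V j) (E j) (\<iota> j a) (\<iota> j b))"

end

theory Submission
  imports Defs
begin

text \<open>Every walk in \<open>G\<^sub>k\<close> is a walk in \<open>H\<close>, so \<open>d\<^sub>H \<le> d\<^sub>G\<^sub>k\<close> on \<open>G\<^sub>k\<close>. Conversely,
  follow a walk of \<open>H\<close> starting at \<open>a \<in> G\<^sub>k\<close> and keep the invariant that its current vertex \<open>v\<close>,
  in whichever \<open>G\<^sub>i\<close> it is viewed, is reached from \<open>a\<close> within the walk's length by a route that
  runs inside \<open>G\<^sub>k\<close> to some \<open>x \<in> J\<close> and then inside \<open>G\<^sub>i\<close> from \<open>x\<close> to \<open>v\<close>. When the walk passes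
  into another \<open>G\<^sub>j\<close> through a vertex of \<open>J\<close>, isometry of the family moves the second leg into
  \<open>G\<^sub>j\<close> at no cost. Hence each \<open>G\<^sub>k\<close> is isometric in \<open>H\<close>, so the union of the \<open>B\<^sub>k\<close> is a local
  metric set of \<open>H\<close> and
  \<open>dim\<^sub>l(H) \<le> |\<Union>\<^sub>k B\<^sub>k| \<le> \<Sum>\<^sub>k |B\<^sub>k| = \<Sum>\<^sub>k dim\<^sub>l(G\<^sub>k) = dim\<^sub>l(H)\<close>;
  equality in the union bound forces the \<open>B\<^sub>k\<close> to be pairwise disjoint.\<close>

lemma walk_len_0: "walk_len V E u v 0 \<longleftrightarrow> u = v \<and> u \<in> V"
  unfolding walk_len_def by (auto simp: length_Suc_conv intro!: exI[of _ "[v]"])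

lemma walk_len_Suc:
  "walk_len V E u z (Suc n) \<longleftrightarrow> (\<exists>y. walk_len V E u y n \<and> E y z) \<and> z \<in> V"
proof
  assume "walk_len V E u z (Suc n)"
  then obtain xs where xs: "length xs = Suc (Suc n)" "hd xs = u" "last xs = z" "set xs \<subseteq> V"
    "\<forall>k<Suc n. E (xs ! k) (xs ! Suc k)" unfolding walk_len_def by blast
  have last_nth: "last ys = ys ! n" if "length ys = Suc n" for ys :: "'a list"
    using that by (metis diff_Suc_1 last_conv_nth list.size(3) nat.distinct(1))
  have "walk_len V E u (xs ! n) n"
    unfolding walk_len_def using xs last_nth[of "take (Suc n) xs"]
    by (intro exI[of _ "take (Suc n) xs"])
       (auto simp: hd_take dest: subsetD[OF set_take_subset])
  moreover have "E (xs ! n) z"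
    using xs by (metis diff_Suc_1 last_conv_nth lessI list.size(3) nat.distinct(1))
  moreover have "z \<in> V"
    using xs by (metis last_in_set list.size(3) nat.distinct(1) subsetD)
  ultimately show "(\<exists>y. walk_len V E u y n \<and> E y z) \<and> z \<in> V" by blast
next
  assume "(\<exists>y. walk_len V E u y n \<and> E y z) \<and> z \<in> V"
  then obtain y xs where y: "E y z" "z \<in> V" and xs: "length xs = Suc n" "hd xs = u"
    "last xs = y" "set xs \<subseteq> V" "\<forall>k<n. E (xs ! k) (xs ! Suc k)"
    unfolding walk_len_def by blast
  have "xs ! n = y" using xs by (metis diff_Suc_1 last_conv_nth list.size(3) nat.distinct(1))
  then have "\<forall>k<Suc n. E ((xs @ [z]) ! k) ((xs @ [z]) ! Suc k)"
    using xs y by (auto simp: nth_append less_Suc_eq)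
  then show "walk_len V E u z (Suc n)"
    unfolding walk_len_def using xs y by (intro exI[of _ "xs @ [z]"]) (auto simp: hd_append)
qed

lemma walk_len_append:
  "walk_len V E u v m \<Longrightarrow> walk_len V E v w n \<Longrightarrow> walk_len V E u w (m + n)"
  by (induction n arbitrary: w) (auto simp: walk_len_0 walk_len_Suc)

lemma walk_len_induct [consumes 1, case_names start step]:
  assumes "walk_len V E s z n"
    and "P s 0"
    and "\<And>x y n. P x n \<Longrightarrow> E x y \<Longrightarrow> P y (Suc n)"
  shows "P z n"
  using assms(1)
proof (induction n arbitrary: z)
  case 0
  then show ?case using assms(2) by (simp add: walk_len_0)
next
  case (Suc n)
  then show ?case using assms(3) by (meson walk_len_Suc)
qed

lemma walk_len_hom:
  assumes "\<And>x. x \<in> V \<Longrightarrow> h x \<in> V'" and "\<And>x y. E x y \<Longrightarrow> E' (h x) (h y)"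
  shows "walk_len V E u v n \<Longrightarrow> walk_len V' E' (h u) (h v) n"
proof (induction n arbitrary: v)
  case 0
  then show ?case by (auto simp: walk_len_0 assms(1))
next
  case (Suc n)
  then obtain y where "walk_len V E u y n" "E y v" "v \<in> V" by (auto simp: walk_len_Suc)
  then have "walk_len V' E' (h u) (h y) n" "E' (h y) (h v)" "h v \<in> V'"
    using Suc.IH assms by auto
  then show ?case by (auto simp: walk_len_Suc)
qed

lemma gdist_le_enat_iff: "gdist V E u v \<le> enat n \<longleftrightarrow> (\<exists>m\<le>n. walk_len V E u v m)"
proof
  assume "gdist V E u v \<le> enat n"
  show "\<exists>m\<le>n. walk_len V E u v m"
  proof (rule ccontr)
    assume "\<not> (\<exists>m\<le>n. walk_len V E u v m)"
    then have "enat (Suc n) \<le> gdist V E u v"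
      unfolding gdist_def by (intro INF_greatest) (auto simp: not_le Suc_le_eq)
    from order_trans[OF this \<open>gdist V E u v \<le> enat n\<close>] show False by simp
  qed
qed (auto simp: gdist_def intro: INF_lower2)

lemma enat_le_by_enat_bounds:
  fixes x y :: enat
  assumes "\<And>n. x \<le> enat n \<Longrightarrow> y \<le> enat n"
  shows "y \<le> x"
  using assms by (cases x) auto

lemma gdist_refl: "u \<in> V \<Longrightarrow> gdist V E u u = 0"
  using gdist_le_enat_iff[of V E u u 0] by (simp add: walk_len_0 enat_0)

lemma gdist_edge: "E u v \<Longrightarrow> u \<in> V \<Longrightarrow> v \<in> V \<Longrightarrow> gdist V E u v \<le> 1"
  using gdist_le_enat_iff[of V E u v "Suc 0"] walk_len_Suc[of V E u v 0]
  by (auto simp: one_enat_def walk_len_0)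

lemma gdist_triangle: "gdist V E u w \<le> gdist V E u v + gdist V E v w"
proof (cases "gdist V E u v" "gdist V E v w" rule: enat2_cases)
  case (enat_enat m n)
  then obtain m' n' where "m' \<le> m" "walk_len V E u v m'" "n' \<le> n" "walk_len V E v w n'"
    using gdist_le_enat_iff order_refl by metis
  then have "gdist V E u w \<le> enat (m + n)"
    using walk_len_append gdist_le_enat_iff by (metis add_mono)
  then show ?thesis using enat_enat by simp
qed auto

lemma gdist_hom_le:
  assumes "\<And>x. x \<in> V \<Longrightarrow> h x \<in> V'" and "\<And>x y. E x y \<Longrightarrow> E' (h x) (h y)"
  shows "gdist V' E' (h u) (h v) \<le> gdist V E u v"
proof (rule enat_le_by_enat_bounds)
  fix n
  show "gdist V E u v \<le> enat n \<Longrightarrow> gdist V' E' (h u) (h v) \<le> enat n"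
    using walk_len_hom[of V h V' E E'] assms by (auto simp: gdist_le_enat_iff)
qed

lemma graph_edge_in_V: "graph V E \<Longrightarrow> E u v \<Longrightarrow> u \<in> V \<and> v \<in> V"
  unfolding graph_def by blast

lemma local_metric_dim_le: "local_metric_set V E S \<Longrightarrow> local_metric_dim V E \<le> card S"
  unfolding local_metric_dim_def by (intro Least_le) blast

lemma card_UN_eq_sum_imp_disjoint:
  assumes "finite I" and "\<And>k. k \<in> I \<Longrightarrow> finite (A k)"
    and "card (\<Union>k\<in>I. A k) = (\<Sum>k\<in>I. card (A k))"
    and "i \<in> I" "j \<in> I" "i \<noteq> j"
  shows "A i \<inter> A j = {}"
proof (rule ccontr)
  assume "A i \<inter> A j \<noteq> {}"
  let ?R = "I - {i, j}"
  have fin: "finite (A i)" "finite (A j)" using assms by auto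
  with \<open>A i \<inter> A j \<noteq> {}\<close> have "card (A i \<union> A j) < card (A i) + card (A j)"
    using card_Un_Int[OF fin] by (simp add: card_gt_0_iff)
  moreover have "card (\<Union>k\<in>?R. A k) \<le> (\<Sum>k\<in>?R. card (A k))"
    using assms(1) by (intro card_UN_le) auto
  moreover have "(\<Union>k\<in>I. A k) = (A i \<union> A j) \<union> (\<Union>k\<in>?R. A k)" using assms by blast
  then have "card (\<Union>k\<in>I. A k) \<le> card (A i \<union> A j) + card (\<Union>k\<in>?R. A k)"
    by (metis card_Un_le)
  moreover have "(\<Sum>k\<in>I. card (A k)) = card (A i) + card (A j) + (\<Sum>k\<in>?R. card (A k))"
    using assms sum.remove[of I i "\<lambda>k. card (A k)"] sum.remove[of "I - {i}" j "\<lambda>k. card (A k)"]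
    by (simp add: Diff_insert2[of I i "{j}"])
  ultimately show False using assms(3) by linarith
qed

locale isometric_amalgamation =
  fixes I :: "'i set" and V :: "'i \<Rightarrow> 'v set" and E :: "'i \<Rightarrow> 'v \<Rightarrow> 'v \<Rightarrow> bool"
    and VJ :: "'j set" and \<iota> :: "'i \<Rightarrow> 'j \<Rightarrow> 'v"
  assumes graph: "i \<in> I \<Longrightarrow> graph (V i) (E i)"
    and inj: "i \<in> I \<Longrightarrow> inj_on (\<iota> i) VJ"
    and iota_image: "i \<in> I \<Longrightarrow> \<iota> i ` VJ \<subseteq> V i"
    and isometric: "isometric_family I V E VJ \<iota>"
begin

abbreviation "VH \<equiv> amal_V I V VJ \<iota>"
abbreviation "EH \<equiv> amal_E I E VJ \<iota>"
abbreviation "f \<equiv> amal_map VJ \<iota>"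
abbreviation "d i \<equiv> gdist (V i) (E i)"

lemma amal_map_iota: "i \<in> I \<Longrightarrow> x \<in> VJ \<Longrightarrow> f i (\<iota> i x) = Inl x"
  unfolding amal_map_def using inj by (simp add: the_inv_into_f_f)

lemma amal_map_eq_cases:
  assumes "i \<in> I" "j \<in> I" "f i v = f j v'"
  obtains (same) "i = j" "v = v'" | (shared) x where "x \<in> VJ" "v = \<iota> i x" "v' = \<iota> j x"
  using assms amal_map_iota unfolding amal_map_def by (auto split: if_splits)

lemma gdist_iota: "i \<in> I \<Longrightarrow> j \<in> I \<Longrightarrow> x \<in> VJ \<Longrightarrow> y \<in> VJ
    \<Longrightarrow> d i (\<iota> i x) (\<iota> i y) = d j (\<iota> j x) (\<iota> j y)"
  using isometric unfolding isometric_family_def by blast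

lemma gdist_amal_le: "k \<in> I \<Longrightarrow> gdist VH EH (f k a) (f k b) \<le> d k a b"
  by (rule gdist_hom_le) (auto simp: amal_V_def amal_E_def)

definition route_le :: "'i \<Rightarrow> 'v \<Rightarrow> 'i \<Rightarrow> 'v \<Rightarrow> nat \<Rightarrow> bool" where
  "route_le k a i v n \<longleftrightarrow>
     (\<exists>y\<in>VJ. d k a (\<iota> k y) + d i (\<iota> i y) v \<le> enat n) \<or> (i = k \<and> d k a v \<le> enat n)"

lemma route_le_start: "a \<in> V k \<Longrightarrow> route_le k a k a 0"
  by (simp add: route_le_def gdist_refl)

lemma route_le_edge:
  assumes "i \<in> I" "route_le k a i u n" "E i u v"
  shows "route_le k a i v (Suc n)"
proof -
  have "d i u v \<le> 1"
    using gdist_edge[of "E i"] graph_edge_in_V[OF graph] assms(1,3) by blast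
  then have "d i x v \<le> d i x u + 1" for x
    using gdist_triangle[of "V i" "E i" x v u] by (meson add_left_mono order_trans)
  have step: "c + d i x v \<le> enat (Suc n)" if "c + d i x u \<le> enat n" for c x
  proof -
    have "c + d i x v \<le> c + d i x u + 1"
      using add_left_mono[OF \<open>d i x v \<le> d i x u + 1\<close>] by (simp add: add.assoc)
    also have "\<dots> \<le> enat n + 1" using that by (rule add_right_mono)
    finally show ?thesis by (simp add: one_enat_def)
  qed
  from assms(2) consider (via_J) y where "y \<in> VJ" "d k a (\<iota> k y) + d i (\<iota> i y) u \<le> enat n"
    | (direct) "i = k" "d k a u \<le> enat n"
    unfolding route_le_def by blast
  then show ?thesis
  proof cases
    case via_J
    then show ?thesis unfolding route_le_def using step by blast
  next
    case direct
    then show ?thesis unfolding route_le_def using step[of 0 a] by simp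
  qed
qed

lemma route_le_transfer:
  assumes "k \<in> I" "i \<in> I" "j \<in> I" "route_le k a j v' n" "f j v' = f i v"
  shows "route_le k a i v n"
  using assms(3,2,5)
proof (cases rule: amal_map_eq_cases)
  case same
  then show ?thesis using assms(4) by simp
next
  case (shared x)
  from assms(4) consider (via_J) y where "y \<in> VJ" "d k a (\<iota> k y) + d j (\<iota> j y) v' \<le> enat n"
    | (direct) "j = k" "d k a v' \<le> enat n"
    unfolding route_le_def by blast
  then show ?thesis
  proof cases
    case (via_J y)
    then show ?thesis
      using shared gdist_iota[OF assms(3,2) \<open>y \<in> VJ\<close> \<open>x \<in> VJ\<close>] unfolding route_le_def by auto
  next
    case direct
    moreover have "d i (\<iota> i x) v = 0"
      using shared iota_image[OF assms(2)] by (simp add: gdist_refl image_subset_iff)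
    ultimately show ?thesis
      using shared unfolding route_le_def by (intro disjI1 bexI[of _ x]) auto
  qed
qed

lemma walk_amal_route_le:
  assumes "k \<in> I" "a \<in> V k" "walk_len VH EH (f k a) z n"
  shows "\<forall>i\<in>I. \<forall>v\<in>V i. f i v = z \<longrightarrow> route_le k a i v n"
  using assms(3)
proof (induction rule: walk_len_induct)
  case start
  show ?case using route_le_transfer[OF assms(1) _ assms(1) route_le_start[OF assms(2)]] by auto
next
  case (step x y n)
  then obtain j u w where "j \<in> I" "E j u w" "x = f j u" "y = f j w"
    unfolding amal_E_def by blast
  have "u \<in> V j" using graph_edge_in_V[OF graph] \<open>j \<in> I\<close> \<open>E j u w\<close> by blast
  with step.IH \<open>j \<in> I\<close> \<open>x = f j u\<close> have "route_le k a j w (Suc n)"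
    using route_le_edge \<open>E j u w\<close> by blast
  then show ?case
    using route_le_transfer[OF assms(1) _ \<open>j \<in> I\<close>] \<open>y = f j w\<close> by auto
qed

theorem gdist_amal:
  assumes "k \<in> I" "a \<in> V k" "b \<in> V k"
  shows "gdist VH EH (f k a) (f k b) = d k a b"
proof (rule antisym)
  show "d k a b \<le> gdist VH EH (f k a) (f k b)"
  proof (rule enat_le_by_enat_bounds)
    fix n assume "gdist VH EH (f k a) (f k b) \<le> enat n"
    then obtain m where "m \<le> n" "walk_len VH EH (f k a) (f k b) m"
      by (auto simp: gdist_le_enat_iff)
    then have "route_le k a k b m" using walk_amal_route_le assms by blast
    then have "d k a b \<le> enat m"
      unfolding route_le_def by (auto intro: order_trans[OF gdist_triangle])
    then show "d k a b \<le> enat n" using \<open>m \<le> n\<close> by (simp add: order_trans)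
  qed
qed (rule gdist_amal_le[OF assms(1)])

lemma local_metric_set_amal:
  assumes "\<And>k. k \<in> I \<Longrightarrow> local_metric_set (V k) (E k) (B k)"
  shows "local_metric_set VH EH (\<Union>k\<in>I. f k ` B k)"
  unfolding local_metric_set_def
proof (intro conjI allI impI)
  show "(\<Union>k\<in>I. f k ` B k) \<subseteq> VH"
    using assms unfolding local_metric_set_def amal_V_def by blast
next
  fix x y assume "EH x y"
  then obtain i u v where i: "i \<in> I" "E i u v" "x = f i u" "y = f i v"
    unfolding amal_E_def by blast
  then obtain w where "w \<in> B i" "d i w u \<noteq> d i w v"
    using assms unfolding local_metric_set_def by blast
  moreover have "w \<in> V i" "u \<in> V i" "v \<in> V i"
    using assms[OF i(1)] \<open>w \<in> B i\<close> graph_edge_in_V[OF graph[OF i(1)] i(2)]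
    unfolding local_metric_set_def by auto
  ultimately have "gdist VH EH (f i w) x \<noteq> gdist VH EH (f i w) y"
    using i gdist_amal by simp
  then show "\<exists>w\<in>\<Union>k\<in>I. f k ` B k. gdist VH EH w x \<noteq> gdist VH EH w y"
    using i(1) \<open>w \<in> B i\<close> by blast
qed

end

theorem lemma5:
  fixes I :: "'i set" and V :: "'i \<Rightarrow> 'v set" and E :: "'i \<Rightarrow> 'v \<Rightarrow> 'v \<Rightarrow> bool"
    and VJ :: "'j set" and EJ :: "'j \<Rightarrow> 'j \<Rightarrow> bool" and \<iota> :: "'i \<Rightarrow> 'j \<Rightarrow> 'v"
    and B :: "'i \<Rightarrow> 'v set"
  assumes "finite I"
    and "graph VJ EJ"
    and "\<And>i. i \<in> I \<Longrightarrow> connected_graph (V i) (E i)"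
    and "\<And>i. i \<in> I \<Longrightarrow> induced_embedding VJ EJ (V i) (E i) (\<iota> i)"
    and "isometric_family I V E VJ \<iota>"
    and "local_metric_dim (amal_V I V VJ \<iota>) (amal_E I E VJ \<iota>)
           = (\<Sum>i\<in>I. local_metric_dim (V i) (E i))"
    and "\<And>k. k \<in> I \<Longrightarrow> local_metric_basis (V k) (E k) (B k)"
  shows "\<forall>i\<in>I. \<forall>j\<in>I. i \<noteq> j \<longrightarrow>
           amal_map VJ \<iota> i ` B i \<inter> amal_map VJ \<iota> j ` B j = {}"
proof -
  interpret isometric_amalgamation I V E VJ \<iota>
    using assms(3-5) by unfold_locales (auto simp: connected_graph_def induced_embedding_def)
  have basis: "local_metric_set (V k) (E k) (B k)" "card (B k) = local_metric_dim (V k) (E k)"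
    if "k \<in> I" for k
    using assms(7)[OF that] unfolding local_metric_basis_def by auto
  have finite_B: "finite (B k)" if "k \<in> I" for k
    using basis(1)[OF that] graph[OF that] unfolding local_metric_set_def graph_def
    by (auto intro: finite_subset)
  have "local_metric_dim VH EH \<le> card (\<Union>k\<in>I. f k ` B k)"
    using local_metric_dim_le local_metric_set_amal basis(1) by blast
  moreover have "card (\<Union>k\<in>I. f k ` B k) \<le> (\<Sum>k\<in>I. card (f k ` B k))"
    using assms(1) by (rule card_UN_le)
  moreover have "(\<Sum>k\<in>I. card (f k ` B k)) \<le> (\<Sum>k\<in>I. card (B k))"
    by (intro sum_mono card_image_le finite_B)
  moreover have "(\<Sum>k\<in>I. card (B k)) = local_metric_dim VH EH"
    using assms(6) basis(2) by simp
  ultimately have "card (\<Union>k\<in>I. f k ` B k) = (\<Sum>k\<in>I. card (f k ` B k))"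
    by linarith
  moreover have "finite (f k ` B k)" if "k \<in> I" for k
    using finite_B[OF that] by blast
  ultimately show ?thesis
    using card_UN_eq_sum_imp_disjoint[OF assms(1), of "\<lambda>k. f k ` B k"] by blast
qed

end
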